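(* Let $\Omega$ be a set and let $G=H\times K\leq{\rm Sym}(\Omega)$ be a finite transitive group which is the internal direct product of subgroups $H$ and $K$ with $\gcd(|H|,|K|)=1$. Let $\alpha\in\Omega$ (so $\Omega=\alpha^G$), $\Omega_1=\alpha^H$ and $\Omega_2=\alpha^K$. Then $G$ acts on $\Omega_1\times\Omega_2$ by the rule $(\alpha^h,\alpha^k)^g=(\alpha^{hh_1},\alpha^{kk_1})$ for $h\in H$, $k\in K$ and $g=h_1k_1$ with $h_1\in H$, $k_1\in K$, and the action of $G$ on $\Omega$ is equivalent to this action of $G$ on $\Omega_1\times\Omega_2$.
   Context: Permutations act on the right; $\alpha^X$ denotes the orbit of $\alpha$ under $X$. Two actions of $G$ on sets $\Omega$ and $\Delta$ are equivalent if there is a bijection $\lambda:\Omega\to\Delta$ with $\lambda(\beta^x)=\lambda(\beta)^x$ for all $\beta\in\Omega$, $x\in G$. *)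

theory Defs
  imports "HOL-Algebra.Group_Action"
begin

definition transitive_on :: "('a \<Rightarrow> 'a) set \<Rightarrow> 'a set \<Rightarrow> bool" where
  "transitive_on G \<Omega> \<longleftrightarrow> (\<forall>\<beta>\<in>\<Omega>. \<forall>\<gamma>\<in>\<Omega>. \<exists>g\<in>G. g \<beta> = \<gamma>)"

definition internal_direct_product :: "('g, 'b) monoid_scheme \<Rightarrow> 'g set \<Rightarrow> 'g set \<Rightarrow> 'g set \<Rightarrow> bool" where
  "internal_direct_product S G H K \<longleftrightarrow>
     subgroup G S \<and> subgroup H S \<and> subgroup K S \<and> H \<subseteq> G \<and> K \<subseteq> G \<and>
     H <#>\<^bsub>S\<^esub> K = G \<and> H \<inter> K = {\<one>\<^bsub>S\<^esub>} \<and>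
     (\<forall>h\<in>H. \<forall>k\<in>K. h \<otimes>\<^bsub>S\<^esub> k = k \<otimes>\<^bsub>S\<^esub> h)"

end

theory Submission
  imports Defs "HOL-Algebra.Multiplicative_Group" "HOL-Number_Theory.Cong"
begin

(* Every point of Omega has the form (h k) alpha with h in H, k in K. Since h and k commute
   and have coprime orders, h is a power of h k, so h k fixes alpha only if h and k both do.
   Hence (h k) alpha determines (and is determined by) the pair (h alpha, k alpha), giving a
   bijection Omega -> Omega_1 x Omega_2. Transporting the action of G along this bijection
   yields an equivalent action, and it acts on pairs componentwise. *)


lemma (in group) pow_eq_pow_mod:
  fixes m k :: nat
  assumes "x \<in> carrier G" "x [^] m = \<one>"
  shows "x [^] k = x [^] (k mod m)"
proof -
  have "x [^] k = x [^] (m * (k div m)) \<otimes> x [^] (k mod m)"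
    using assms(1) by (simp add: nat_pow_mult)
  also have "\<dots> = (x [^] m) [^] (k div m) \<otimes> x [^] (k mod m)"
    using assms(1) by (simp add: nat_pow_pow)
  finally show ?thesis using assms by simp
qed

(* If n u = 1 (mod m), then (x y)^(n u) = x^(n u) y^(n u) = x. *)
lemma (in group) commuting_coprime_factor_is_pow:
  fixes m n :: nat
  assumes "x \<in> carrier G" "y \<in> carrier G" "x \<otimes> y = y \<otimes> x"
    and "x [^] m = \<one>" "y [^] n = \<one>" "coprime m n"
  shows "\<exists>t::nat. x = (x \<otimes> y) [^] t"
proof -
  obtain u where u: "[n * u = 1] (mod m)"
    using cong_solve_coprime_nat[of n m] assms(6) by (auto simp: coprime_commute)
  have "(x \<otimes> y) [^] (n * u) = x [^] (n * u) \<otimes> (y [^] n) [^] u"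
    using pow_mult_distrib[OF assms(3,1,2)] nat_pow_pow[OF assms(2)] by simp
  also have "\<dots> = x [^] ((n * u) mod m)"
    using assms(1,5) pow_eq_pow_mod[OF assms(1,4)] by simp
  also have "\<dots> = x"
    using u assms(1,4) pow_eq_pow_mod[of x m 1] by (simp add: cong_def)
  finally show ?thesis by metis
qed

lemma (in group) subgroup_pow_card_eq_one:
  assumes "subgroup H G" "finite H" "x \<in> H"
  shows "x [^] card H = \<one>"
proof -
  interpret H: group "G\<lparr>carrier := H\<rparr>"
    using subgroup.subgroup_is_group[OF assms(1) is_group] .
  show ?thesis
    using H.pow_order_eq_1 assms(3) nat_pow_consistent by (simp add: order_def)
qed

lemma (in group) m_assoc_commuting_middle:
  assumes "x \<in> carrier G" "y \<in> carrier G" "z \<in> carrier G" "w \<in> carrier G" "y \<otimes> z = z \<otimes> y"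
  shows "(x \<otimes> y) \<otimes> (z \<otimes> w) = (x \<otimes> z) \<otimes> (y \<otimes> w)"
  using assms by (metis m_assoc m_closed)

lemma ex_bij_betw_of_same_fibres:
  assumes "f ` A = B" "g ` A = C"
    and "\<And>a a'. a \<in> A \<Longrightarrow> a' \<in> A \<Longrightarrow> f a = f a' \<longleftrightarrow> g a = g a'"
  shows "\<exists>\<sigma>. bij_betw \<sigma> B C \<and> (\<forall>a\<in>A. \<sigma> (f a) = g a)"
proof -
  define \<sigma> where "\<sigma> b = g (SOME a. a \<in> A \<and> f a = b)" for b
  have \<sigma>f: "\<sigma> (f a) = g a" if "a \<in> A" for a
  proof -
    have "(SOME a'. a' \<in> A \<and> f a' = f a) \<in> A \<and> f (SOME a'. a' \<in> A \<and> f a' = f a) = f a"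
      by (rule someI) (use that in blast)
    then show ?thesis unfolding \<sigma>_def using assms(3) that by blast
  qed
  have "inj_on \<sigma> B"
    using assms \<sigma>f by (auto simp: inj_on_def)
  moreover have "\<sigma> ` B = C"
    using assms(1,2) \<sigma>f by (force simp: image_image)
  ultimately show ?thesis
    using \<sigma>f by (auto simp: bij_betw_def)
qed

lemma (in group_action) fixed_point_pow:
  assumes "g \<in> carrier G" "x \<in> E" "\<phi> g x = x"
  shows "\<phi> (g [^] (n::nat)) x = x"
proof (induction n)
  case 0
  then show ?case using assms(2) id_eq_one by (metis nat_pow_0 restrict_apply')
next
  case (Suc n)
  interpret group G using group_hom group_hom.axioms(1) by blast
  show ?case using Suc assms by (simp add: composition_rule)
qed

lemma (in group_action) act_eq_iff_stabilizes:
  assumes "g \<in> carrier G" "g' \<in> carrier G" "x \<in> E"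
  shows "\<phi> g x = \<phi> g' x \<longleftrightarrow> \<phi> (inv g' \<otimes> g) x = x"
proof -
  interpret group G using group_hom group_hom.axioms(1) by blast
  have gx: "\<phi> g x \<in> E"
    using assms element_image by blast
  have "\<phi> (inv g' \<otimes> g) x = \<phi> (inv g') (\<phi> g x)"
    using assms by (simp add: composition_rule)
  moreover have "\<phi> (inv g') (\<phi> g' x) = x"
    using orbit_sym_aux[OF assms(2,3) refl] .
  moreover have "\<phi> g' x = \<phi> g x" if "\<phi> (inv g') (\<phi> g x) = x"
    using orbit_sym_aux[of "inv g'", OF _ gx that] assms(2) by simp
  ultimately show ?thesis by metis
qed

lemma (in group_action) commuting_coprime_factor_fixes:
  fixes m n :: nat
  assumes "x \<in> carrier G" "y \<in> carrier G" "x \<otimes> y = y \<otimes> x"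
    and "x [^] m = \<one>" "y [^] n = \<one>" "coprime m n"
    and "a \<in> E" "\<phi> (x \<otimes> y) a = a"
  shows "\<phi> x a = a"
proof -
  interpret group G using group_hom group_hom.axioms(1) by blast
  obtain t :: nat where t: "x = (x \<otimes> y) [^] t"
    using commuting_coprime_factor_is_pow[OF assms(1-6)] by blast
  have "\<phi> ((x \<otimes> y) [^] t) a = a"
    using fixed_point_pow[OF m_closed[OF assms(1,2)] assms(7,8)] .
  then show ?thesis by (simp only: t[symmetric])
qed

lemma (in group_action) act_product_eq_iff:
  assumes "subgroup H G" "subgroup K G" "finite H" "finite K" "coprime (card H) (card K)"
    and comm: "\<And>h k. h \<in> H \<Longrightarrow> k \<in> K \<Longrightarrow> h \<otimes> k = k \<otimes> h"
    and "a \<in> E" "h \<in> H" "k \<in> K" "h' \<in> H" "k' \<in> K"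
  shows "\<phi> (h \<otimes> k) a = \<phi> (h' \<otimes> k') a \<longleftrightarrow> \<phi> h a = \<phi> h' a \<and> \<phi> k a = \<phi> k' a"
proof -
  interpret group G using group_hom group_hom.axioms(1) by blast
  have H: "H \<subseteq> carrier G" and K: "K \<subseteq> carrier G"
    using assms(1,2) subgroup.subset by auto
  define x where "x = inv h' \<otimes> h"
  define y where "y = inv k' \<otimes> k"
  have xH: "x \<in> H" and yK: "y \<in> K"
    unfolding x_def y_def using assms(1,2,8-11) by (simp_all add: subgroup.m_closed subgroup.m_inv_closed)
  have xyc: "x \<in> carrier G" "y \<in> carrier G" and xy: "x \<otimes> y = y \<otimes> x"
    using xH yK H K comm by auto
  have c: "h \<in> carrier G" "k \<in> carrier G" "h' \<in> carrier G" "k' \<in> carrier G"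
    using assms(8-11) H K by auto
  have inv: "inv h' \<in> H" "inv k' \<in> K"
    using assms(1,2,10,11) by (simp_all add: subgroup.m_inv_closed)
  have "inv (h' \<otimes> k') \<otimes> (h \<otimes> k) = (inv h' \<otimes> inv k') \<otimes> (h \<otimes> k)"
    using c comm[OF inv] by (simp add: inv_mult_group)
  also have "\<dots> = x \<otimes> y"
    unfolding x_def y_def using c comm[OF assms(8) inv(2)]
    by (intro m_assoc_commuting_middle) auto
  finally have prod: "inv (h' \<otimes> k') \<otimes> (h \<otimes> k) = x \<otimes> y" .
  have fix_iff: "\<phi> (x \<otimes> y) a = a \<longleftrightarrow> \<phi> x a = a \<and> \<phi> y a = a"
  proof
    assume fixed: "\<phi> (x \<otimes> y) a = a"
    have "x [^] card H = \<one>" "y [^] card K = \<one>"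
      using xH yK assms(1-4) subgroup_pow_card_eq_one by auto
    then show "\<phi> x a = a \<and> \<phi> y a = a"
      using commuting_coprime_factor_fixes[OF xyc xy _ _ assms(5,7) fixed]
        commuting_coprime_factor_fixes[OF xyc(2,1) xy[symmetric] _ _ _ assms(7)] fixed xy assms(5)
      by (simp add: coprime_commute)
  qed (use xyc assms(7) in \<open>simp add: composition_rule\<close>)
  have "\<phi> (h \<otimes> k) a = \<phi> (h' \<otimes> k') a \<longleftrightarrow> \<phi> (x \<otimes> y) a = a"
    using act_eq_iff_stabilizes[of "h \<otimes> k" "h' \<otimes> k'" a] prod c assms(7) by simp
  also have "\<dots> \<longleftrightarrow> \<phi> x a = a \<and> \<phi> y a = a"
    by (rule fix_iff)
  also have "\<dots> \<longleftrightarrow> \<phi> h a = \<phi> h' a \<and> \<phi> k a = \<phi> k' a"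
    unfolding x_def y_def
    using act_eq_iff_stabilizes[OF c(1,3) assms(7)] act_eq_iff_stabilizes[OF c(2,4) assms(7)] by simp
  finally show ?thesis .
qed

lemma (in group_action) transport_along_bij:
  assumes "bij_betw \<sigma> E F"
  shows "\<exists>\<psi>. group_action G F \<psi> \<and> (\<forall>g\<in>carrier G. \<forall>x\<in>E. \<psi> g (\<sigma> x) = \<sigma> (\<phi> g x))"
proof -
  interpret group G using group_hom group_hom.axioms(1) by blast
  define \<tau> where "\<tau> = inv_into E \<sigma>"
  have \<tau>: "bij_betw \<tau> F E" "\<And>y. y \<in> F \<Longrightarrow> \<sigma> (\<tau> y) = y" "\<And>x. x \<in> E \<Longrightarrow> \<tau> (\<sigma> x) = x"
    unfolding \<tau>_def using assms
    by (auto simp: bij_betw_inv_into bij_betw_inv_into_right bij_betw_inv_into_left)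
  define \<psi> where "\<psi> g = (\<lambda>y\<in>F. \<sigma> (\<phi> g (\<tau> y)))" for g
  have Bij: "\<psi> g \<in> Bij F" if "g \<in> carrier G" for g
  proof -
    have "bij_betw (\<phi> g) E E"
      using bij_prop0[OF that] by (simp add: Bij_def)
    then have "bij_betw (\<sigma> \<circ> \<phi> g \<circ> \<tau>) F F"
      using \<tau>(1) assms by (intro bij_betw_trans)
    then have "bij_betw (\<psi> g) F F"
      by (rule bij_betw_cong[THEN iffD1, rotated]) (simp add: \<psi>_def)
    then show ?thesis by (simp add: Bij_def \<psi>_def)
  qed
  have mult: "\<psi> (g \<otimes> h) = compose F (\<psi> g) (\<psi> h)" if "g \<in> carrier G" "h \<in> carrier G" for g h
  proof
    fix y
    show "\<psi> (g \<otimes> h) y = compose F (\<psi> g) (\<psi> h) y"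
    proof (cases "y \<in> F")
      case True
      then have "\<phi> h (\<tau> y) \<in> E" "\<sigma> (\<phi> h (\<tau> y)) \<in> F"
        using \<tau>(1) that assms element_image bij_betw_apply by metis+
      then show ?thesis
        using True that \<tau> bij_betw_apply[OF \<tau>(1) True]
        by (simp add: \<psi>_def compose_def composition_rule)
    qed (simp add: \<psi>_def compose_def)
  qed
  have "\<psi> \<in> hom G (BijGroup F)"
    using Bij mult by (simp add: hom_def BijGroup_def)
  then have "group_action G F \<psi>"
    unfolding group_action_def group_hom_def group_hom_axioms_def
    by (simp add: group_BijGroup is_group)
  moreover have "\<psi> g (\<sigma> x) = \<sigma> (\<phi> g x)" if "x \<in> E" for g x
    using that \<tau>(3) bij_betw_apply[OF assms that] by (simp add: \<psi>_def)
  ultimately show ?thesis by blast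
qed

lemma (in group_action) coprime_product_orbit_bij:
  assumes "subgroup H G" "subgroup K G" "finite H" "finite K" "coprime (card H) (card K)"
    and "\<And>h k. h \<in> H \<Longrightarrow> k \<in> K \<Longrightarrow> h \<otimes> k = k \<otimes> h"
    and "a \<in> E" and onto: "\<And>x. x \<in> E \<Longrightarrow> \<exists>h\<in>H. \<exists>k\<in>K. \<phi> (h \<otimes> k) a = x"
  shows "\<exists>\<sigma>. bij_betw \<sigma> E ((\<lambda>h. \<phi> h a) ` H \<times> (\<lambda>k. \<phi> k a) ` K)
           \<and> (\<forall>h\<in>H. \<forall>k\<in>K. \<sigma> (\<phi> (h \<otimes> k) a) = (\<phi> h a, \<phi> k a))"
proof -
  interpret group G using group_hom group_hom.axioms(1) by blast
  let ?orbit = "\<lambda>(h, k). \<phi> (h \<otimes> k) a" and ?pair = "\<lambda>(h, k). (\<phi> h a, \<phi> k a)"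
  have inE: "\<phi> (h \<otimes> k) a \<in> E" if "h \<in> H" "k \<in> K" for h k
    using that assms(1,2,7) by (meson element_image m_closed subgroup.mem_carrier)
  have "?orbit ` (H \<times> K) = E"
  proof
    show "?orbit ` (H \<times> K) \<subseteq> E"
      using inE by auto
    show "E \<subseteq> ?orbit ` (H \<times> K)"
    proof
      fix x assume "x \<in> E"
      obtain h k where "h \<in> H" "k \<in> K" "\<phi> (h \<otimes> k) a = x"
        using onto[OF \<open>x \<in> E\<close>] by (elim bexE)
      then show "x \<in> ?orbit ` (H \<times> K)"
        by (intro image_eqI[of _ _ "(h, k)"]) auto
    qed
  qed
  moreover have "?pair ` (H \<times> K) = (\<lambda>h. \<phi> h a) ` H \<times> (\<lambda>k. \<phi> k a) ` K"
    by (rule image_paired_Times)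
  moreover have "?orbit p = ?orbit p' \<longleftrightarrow> ?pair p = ?pair p'" if "p \<in> H \<times> K" "p' \<in> H \<times> K" for p p'
    using that by (cases p, cases p') (simp add: act_product_eq_iff[OF assms(1-7)])
  ultimately have "\<exists>\<sigma>. bij_betw \<sigma> E ((\<lambda>h. \<phi> h a) ` H \<times> (\<lambda>k. \<phi> k a) ` K)
                    \<and> (\<forall>p\<in>H \<times> K. \<sigma> (?orbit p) = ?pair p)"
    by (rule ex_bij_betw_of_same_fibres)
  then show ?thesis by simp
qed

theorem (in group_action) coprime_direct_factors_action_equivalence:
  assumes "subgroup H G" "subgroup K G" "finite H" "finite K" "coprime (card H) (card K)"
    and comm: "\<And>h k. h \<in> H \<Longrightarrow> k \<in> K \<Longrightarrow> h \<otimes> k = k \<otimes> h"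
    and "a \<in> E" and "\<And>x. x \<in> E \<Longrightarrow> \<exists>h\<in>H. \<exists>k\<in>K. \<phi> (h \<otimes> k) a = x"
  shows "\<exists>\<rho> \<sigma>. group_action G ((\<lambda>h. \<phi> h a) ` H \<times> (\<lambda>k. \<phi> k a) ` K) \<rho>
           \<and> bij_betw \<sigma> E ((\<lambda>h. \<phi> h a) ` H \<times> (\<lambda>k. \<phi> k a) ` K)
           \<and> (\<forall>g\<in>carrier G. \<forall>x\<in>E. \<rho> g (\<sigma> x) = \<sigma> (\<phi> g x))
           \<and> (\<forall>h\<in>H. \<forall>k\<in>K. \<forall>h1\<in>H. \<forall>k1\<in>K.
                \<rho> (h1 \<otimes> k1) (\<phi> h a, \<phi> k a) = (\<phi> h1 (\<phi> h a), \<phi> k1 (\<phi> k a)))"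
proof -
  obtain \<sigma> where \<sigma>: "bij_betw \<sigma> E ((\<lambda>h. \<phi> h a) ` H \<times> (\<lambda>k. \<phi> k a) ` K)"
    and \<sigma>_orbit: "\<forall>h\<in>H. \<forall>k\<in>K. \<sigma> (\<phi> (h \<otimes> k) a) = (\<phi> h a, \<phi> k a)"
    using coprime_product_orbit_bij[OF assms] by blast
  obtain \<rho> where \<rho>: "group_action G ((\<lambda>h. \<phi> h a) ` H \<times> (\<lambda>k. \<phi> k a) ` K) \<rho>"
    and equivariant: "\<forall>g\<in>carrier G. \<forall>x\<in>E. \<rho> g (\<sigma> x) = \<sigma> (\<phi> g x)"
    using transport_along_bij[OF \<sigma>] by blast
  interpret group G using group_hom group_hom.axioms(1) by blast
  have componentwise: "\<rho> (h1 \<otimes> k1) (\<phi> h a, \<phi> k a) = (\<phi> h1 (\<phi> h a), \<phi> k1 (\<phi> k a))"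
    if "h \<in> H" "k \<in> K" "h1 \<in> H" "k1 \<in> K" for h k h1 k1
  proof -
    have c: "h \<in> carrier G" "k \<in> carrier G" "h1 \<in> carrier G" "k1 \<in> carrier G"
      using that subgroup.mem_carrier[OF assms(1)] subgroup.mem_carrier[OF assms(2)] by auto
    have "\<rho> (h1 \<otimes> k1) (\<phi> h a, \<phi> k a) = \<rho> (h1 \<otimes> k1) (\<sigma> (\<phi> (h \<otimes> k) a))"
      using \<sigma>_orbit that(1,2) by simp
    also have "\<dots> = \<sigma> (\<phi> (h1 \<otimes> k1) (\<phi> (h \<otimes> k) a))"
      using equivariant element_image[OF _ assms(7) refl] c by simp
    also have "\<dots> = \<sigma> (\<phi> ((h1 \<otimes> k1) \<otimes> (h \<otimes> k)) a)"
      using composition_rule assms(7) c by simp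
    also have "(h1 \<otimes> k1) \<otimes> (h \<otimes> k) = (h1 \<otimes> h) \<otimes> (k1 \<otimes> k)"
      using c comm[OF that(1,4), symmetric] by (intro m_assoc_commuting_middle)
    also have "\<sigma> (\<phi> ((h1 \<otimes> h) \<otimes> (k1 \<otimes> k)) a) = (\<phi> (h1 \<otimes> h) a, \<phi> (k1 \<otimes> k) a)"
      using \<sigma>_orbit that subgroup.m_closed[OF assms(1)] subgroup.m_closed[OF assms(2)] by simp
    also have "\<dots> = (\<phi> h1 (\<phi> h a), \<phi> k1 (\<phi> k a))"
      using composition_rule assms(7) c by simp
    finally show ?thesis .
  qed
  show ?thesis
    by (intro exI[of _ \<rho>] exI[of _ \<sigma>] conjI \<rho> \<sigma> equivariant ballI componentwise)
qed

lemma group_action_BijGroup: "group_action (BijGroup S) S (\<lambda>g. g)"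
  unfolding group_action_def group_hom_def group_hom_axioms_def hom_def
  by (simp add: group_BijGroup)

theorem mainTheorem14:
  fixes \<Omega> :: "'a set" and G H K :: "('a \<Rightarrow> 'a) set" and \<alpha> :: 'a
  assumes "subgroup G (BijGroup \<Omega>)"
    and "finite G"
    and "transitive_on G \<Omega>"
    and "internal_direct_product (BijGroup \<Omega>) G H K"
    and "coprime (card H) (card K)"
    and "\<alpha> \<in> \<Omega>"
  shows "\<exists>\<rho>. group_action ((BijGroup \<Omega>)\<lparr>carrier := G\<rparr>)
                   ((\<lambda>h. h \<alpha>) ` H \<times> (\<lambda>k. k \<alpha>) ` K) \<rho>
            \<and> (\<forall>h\<in>H. \<forall>k\<in>K. \<forall>h1\<in>H. \<forall>k1\<in>K.
                 \<rho> (h1 \<otimes>\<^bsub>BijGroup \<Omega>\<^esub> k1) (h \<alpha>, k \<alpha>) = (h1 (h \<alpha>), k1 (k \<alpha>)))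
            \<and> (\<exists>\<sigma>. bij_betw \<sigma> \<Omega> ((\<lambda>h. h \<alpha>) ` H \<times> (\<lambda>k. k \<alpha>) ` K)
                 \<and> (\<forall>\<beta>\<in>\<Omega>. \<forall>g\<in>G. \<sigma> (g \<beta>) = \<rho> g (\<sigma> \<beta>)))"
proof -
  let ?S = "BijGroup \<Omega>"
  let ?G = "?S\<lparr>carrier := G\<rparr>"
  interpret S: group ?S by (rule group_BijGroup)
  interpret GA: group_action ?G \<Omega> "\<lambda>g. g"
    using group_action.induced_action[OF group_action_BijGroup assms(1)] .
  have H: "subgroup H ?S" and K: "subgroup K ?S" and HK: "H <#>\<^bsub>?S\<^esub> K = G"
    and comm: "\<And>h k. h \<in> H \<Longrightarrow> k \<in> K \<Longrightarrow> h \<otimes>\<^bsub>?S\<^esub> k = k \<otimes>\<^bsub>?S\<^esub> h"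
    and sub: "H \<subseteq> G" "K \<subseteq> G"
    using assms(4) unfolding internal_direct_product_def by blast+
  have comm': "h \<otimes>\<^bsub>?G\<^esub> k = k \<otimes>\<^bsub>?G\<^esub> h" if "h \<in> H" "k \<in> K" for h k
    using comm[OF that] by simp
  have onto: "\<exists>h\<in>H. \<exists>k\<in>K. (h \<otimes>\<^bsub>?G\<^esub> k) \<alpha> = \<beta>" if \<beta>: "\<beta> \<in> \<Omega>" for \<beta>
  proof -
    obtain g where "g \<in> G" "g \<alpha> = \<beta>"
      using assms(3)[unfolded transitive_on_def, rule_format, OF assms(6) \<beta>] by blast
    then show ?thesis
      using HK unfolding set_mult_def by auto
  qed
  obtain \<rho> \<sigma> where
    "group_action ?G ((\<lambda>h. h \<alpha>) ` H \<times> (\<lambda>k. k \<alpha>) ` K) \<rho>"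
    "bij_betw \<sigma> \<Omega> ((\<lambda>h. h \<alpha>) ` H \<times> (\<lambda>k. k \<alpha>) ` K)"
    "\<forall>g\<in>carrier ?G. \<forall>\<beta>\<in>\<Omega>. \<rho> g (\<sigma> \<beta>) = \<sigma> (g \<beta>)"
    "\<forall>h\<in>H. \<forall>k\<in>K. \<forall>h1\<in>H. \<forall>k1\<in>K.
       \<rho> (h1 \<otimes>\<^bsub>?G\<^esub> k1) (h \<alpha>, k \<alpha>) = (h1 (h \<alpha>), k1 (k \<alpha>))"
    using GA.coprime_direct_factors_action_equivalence[OF S.subgroup_incl[OF H assms(1) sub(1)]
        S.subgroup_incl[OF K assms(1) sub(2)] finite_subset[OF sub(1) assms(2)]
        finite_subset[OF sub(2) assms(2)] assms(5) comm' assms(6) onto]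
    by blast
  then show ?thesis
    by (intro exI[of _ \<rho>] conjI exI[of _ \<sigma>]) auto
qed

end
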